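(* In the setting below, $p_-+p_+\ge1$. Moreover, $p_-+p_+=1$ if and only if $\mathbb{P}(Z=0)=0$, where $Z=\sup_{0\le t\le1}(\bar W^-_t+f(-t))+\inf_{0\le t\le1}(\bar W^+_t-f(t))$ for two independent Brownian motions $\bar W^-,\bar W^+$ on $[0,1]$ with $\bar W^-_0=\bar W^+_0=0$.
   Context: All Brownian motions have a common variance $\sigma^2>0$ per unit time. Let $f:[-1,1]\to\mathbb{R}$ be continuous with $f(0)=0$ (the "barrier"). Let $W^-$ be a Brownian motion on $[-1,1]$ and define $\tilde W^-_t=\sup_{-1\le s\le t}(f(s)+W^-_t-W^-_s)$ for $t\in[-1,0]$ (Brownian motion started at $f(-1)$ reflected above $f$); on $[0,1]$, $\tilde W^-_t=\tilde W^-_0+W^-_t-W^-_0$ for $t\le\sigma_-\wedge1$ where $\sigma_-=\inf\{t\ge0:\tilde W^-_t=f(t)\}$, and $\tilde W^-_t=f(t)$ for $t\ge\sigma_-$ (absorption). Let $p_-=\mathbb{P}(\sigma_-<1)$. Symmetrically, with a Brownian motion $W^+$ on $[-1,1]$, let $\tilde W^+_t=\sup_{t\le s\le1}(f(s)+W^+_t-W^+_s)$ for $t\in[0,1]$ (started at $f(1)$ at time $1$, reflected above $f$ backwards in time), and on $[-1,0]$, $\tilde W^+_t=\tilde W^+_0+W^+_t-W^+_0$ for $t\ge\sigma_+$ where $\sigma_+=\sup\{t\le0:\tilde W^+_t=f(t)\}$, absorbed into $f$ before $\sigma_+$. Let $p_+=\mathbb{P}(\sigma_+>-1)$. *)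

theory Defs
  imports "HOL-Probability.Probability"
begin

text \<open>No condition on the initial value is imposed.\<close>
definition BM_on :: "'a measure \<Rightarrow> real \<Rightarrow> real \<Rightarrow> real \<Rightarrow> ('a \<Rightarrow> real \<Rightarrow> real) \<Rightarrow> bool" where
  "BM_on M s a b W \<longleftrightarrow> prob_space M \<and> a < b \<and>
     (\<forall>t\<in>{a..b}. (\<lambda>\<omega>. W \<omega> t) \<in> borel_measurable M) \<and>
     (\<forall>\<omega>\<in>space M. continuous_on {a..b} (W \<omega>)) \<and>
     (\<forall>ts::real list. sorted_wrt (<) ts \<and> set ts \<subseteq> {a..b} \<longrightarrow>
        prob_space.indep_vars M (\<lambda>_. borel)
           (\<lambda>i \<omega>. W \<omega> (ts ! Suc i) - W \<omega> (ts ! i)) {..<length ts - 1} \<and>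
        (\<forall>i < length ts - 1. distributed M lborel
           (\<lambda>\<omega>. W \<omega> (ts ! Suc i) - W \<omega> (ts ! i))
           (\<lambda>x. ennreal (normal_density 0 (s * sqrt (ts ! Suc i - ts ! i)) x))))"

text \<open>The "minus" construction: reflection above f on [-1,0], started at f(-1).\<close>
definition refl_minus :: "(real \<Rightarrow> real) \<Rightarrow> (real \<Rightarrow> real) \<Rightarrow> real \<Rightarrow> real" where
  "refl_minus f W t = Sup ((\<lambda>s. f s + W t - W s) ` {-1..t})"

text \<open>On [0,1], before absorption, the process moves freely like W.\<close>
definition free_minus :: "(real \<Rightarrow> real) \<Rightarrow> (real \<Rightarrow> real) \<Rightarrow> real \<Rightarrow> real" where
  "free_minus f W t = refl_minus f W 0 + W t - W 0"

text \<open>sigma_- = inf {t in [0,1] : process hits f}, with inf of the empty set = +infinity.\<close>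
definition sigma_minus :: "(real \<Rightarrow> real) \<Rightarrow> (real \<Rightarrow> real) \<Rightarrow> ereal" where
  "sigma_minus f W = Inf (ereal ` {t \<in> {0..1}. free_minus f W t = f t})"

definition p_minus :: "'a measure \<Rightarrow> (real \<Rightarrow> real) \<Rightarrow> ('a \<Rightarrow> real \<Rightarrow> real) \<Rightarrow> real" where
  "p_minus M f W = measure M {\<omega> \<in> space M. sigma_minus f (W \<omega>) < 1}"

text \<open>The "plus" construction: reflection above f backwards in time on [0,1], started at f(1) at time 1.\<close>
definition refl_plus :: "(real \<Rightarrow> real) \<Rightarrow> (real \<Rightarrow> real) \<Rightarrow> real \<Rightarrow> real" where
  "refl_plus f W t = Sup ((\<lambda>s. f s + W t - W s) ` {t..1})"

definition free_plus :: "(real \<Rightarrow> real) \<Rightarrow> (real \<Rightarrow> real) \<Rightarrow> real \<Rightarrow> real" where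
  "free_plus f W t = refl_plus f W 0 + W t - W 0"

text \<open>sigma_+ = sup {t in [-1,0] : process hits f}, with sup of the empty set = -infinity.\<close>
definition sigma_plus :: "(real \<Rightarrow> real) \<Rightarrow> (real \<Rightarrow> real) \<Rightarrow> ereal" where
  "sigma_plus f W = Sup (ereal ` {t \<in> {-1..0}. free_plus f W t = f t})"

definition p_plus :: "'a measure \<Rightarrow> (real \<Rightarrow> real) \<Rightarrow> ('a \<Rightarrow> real \<Rightarrow> real) \<Rightarrow> real" where
  "p_plus M f W = measure M {\<omega> \<in> space M. sigma_plus f (W \<omega>) > -1}"

definition Zval :: "(real \<Rightarrow> real) \<Rightarrow> (real \<Rightarrow> real) \<Rightarrow> (real \<Rightarrow> real) \<Rightarrow> real" where
  "Zval f B1 B2 = Sup ((\<lambda>t. B1 t + f (-t)) ` {0..1}) + Inf ((\<lambda>t. B2 t - f t) ` {0..1})"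

end

theory Submission
  imports Defs
begin

(* Write g(u) = f(u) - (W_u - W_0) for the gap between the barrier and the increment of the
   driving path since time 0. At time 0 the reflected process is f plus the maximum of g over
   [-1,0] (resp. [0,1]), and the free process started there is absorbed exactly where g reaches
   this maximum on the other side. So sigma_- < 1 iff g on [0,1) reaches max_[-1,0] g, and
   sigma_+ > -1 iff g on (-1,0] reaches max_[0,1] g. Unless one of these maxima equals the value
   of g at the far endpoint, at least one of the two events occurs, and both occur iff the two
   maxima coincide. All events depend only on increments, so they can be evaluated on the path
   obtained by gluing the time reversal of the first independent Brownian motion to the second.
   For that path the difference of the two maxima is Z, and the far-endpoint events are null
   because Brownian motion at time 1 has no atoms and is independent of the other maximum.
   Inclusion-exclusion then gives p_- + p_+ = 1 + P(Z = 0). *)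

section \<open>Suprema over rational times\<close>

definition rat_interval :: "real \<Rightarrow> real \<Rightarrow> real set" where
  "rat_interval a b = {q \<in> \<rat>. a \<le> q \<and> q \<le> b}"

lemma rat_interval_subset: "rat_interval a b \<subseteq> {a..b}"
  by (auto simp: rat_interval_def)

lemma rat_interval_memI: "q \<in> \<rat> \<Longrightarrow> a \<le> q \<Longrightarrow> q \<le> b \<Longrightarrow> q \<in> rat_interval a b"
  by (simp add: rat_interval_def)

lemma rat_interval_mono: "c \<le> a \<Longrightarrow> b \<le> d \<Longrightarrow> rat_interval a b \<subseteq> rat_interval c d"
  by (auto simp: rat_interval_def)

lemma countable_rat_interval: "countable (rat_interval a b)"
  by (rule countable_subset[OF _ countable_rat]) (auto simp: rat_interval_def)

lemma rat_interval_approachable: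
  assumes "b \<in> \<rat>" "t \<in> {a..b}" "e > 0"
  obtains q where "q \<in> rat_interval a b" "dist q t < e"
proof (cases "t < b")
  case True
  obtain q where "q \<in> \<rat>" "t < q" "q < min (t + e) b"
    using Rats_dense_in_real[of t "min (t + e) b"] True assms by auto
  then show ?thesis using that[of q] assms by (auto simp: rat_interval_def dist_real_def)
next
  case False
  then show ?thesis using that[of b] assms by (auto simp: rat_interval_def)
qed

lemma SUP_rat_interval_eq_Sup:
  fixes g :: "real \<Rightarrow> real"
  assumes ab: "a \<le> b" "a \<in> \<rat>" "b \<in> \<rat>" and g: "continuous_on {a..b} g"
  shows "(SUP q\<in>rat_interval a b. ereal (g q)) = ereal (Sup (g ` {a..b}))"
proof -
  obtain t0 where t0: "t0 \<in> {a..b}" "\<forall>y\<in>{a..b}. g y \<le> g t0"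
    using continuous_attains_sup[OF compact_Icc _ g] ab by auto
  have bdd: "bdd_above (g ` {a..b})"
    using compact_continuous_image[OF g compact_Icc] by (simp add: compact_imp_bounded bounded_imp_bdd_above)
  have Sup_eq: "Sup (g ` {a..b}) = g t0"
    using t0 by (intro antisym cSup_least cSup_upper bdd) auto
  have le: "(SUP q\<in>rat_interval a b. ereal (g q)) \<le> ereal (g t0)"
    using t0 rat_interval_subset by (intro SUP_least) auto
  have "ereal (g a) \<le> (SUP q\<in>rat_interval a b. ereal (g q))"
    using ab by (intro SUP_upper) (auto simp: rat_interval_def)
  then obtain r where r: "(SUP q\<in>rat_interval a b. ereal (g q)) = ereal r"
    using le by (cases "SUP q\<in>rat_interval a b. ereal (g q)") auto
  have "g t0 \<le> r + e" if "e > 0" for e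
  proof -
    obtain d where d: "d > 0" "\<forall>x\<in>{a..b}. dist x t0 < d \<longrightarrow> dist (g x) (g t0) < e"
      using g t0(1) \<open>e > 0\<close> unfolding continuous_on_iff by blast
    obtain q where q: "q \<in> rat_interval a b" "dist q t0 < d"
      using rat_interval_approachable[OF ab(3) t0(1) d(1)] .
    have "ereal (g q) \<le> ereal r" using q(1) r by (metis SUP_upper)
    moreover have "g t0 - e \<le> g q" using d q rat_interval_subset by (force simp: dist_real_def)
    ultimately show ?thesis by simp
  qed
  then have "g t0 \<le> r" by (rule field_le_epsilon)
  then have "ereal (g t0) \<le> (SUP q\<in>rat_interval a b. ereal (g q))" using r by simp
  then show ?thesis using le Sup_eq by simp
qed

section \<open>Pathwise analysis of the two absorptions\<close>

definition barrier_gap :: "(real \<Rightarrow> real) \<Rightarrow> (real \<Rightarrow> real) \<Rightarrow> real \<Rightarrow> real" where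
  "barrier_gap f w u = f u - (w u - w 0)"

lemma continuous_on_interior_above:
  fixes g :: "real \<Rightarrow> real"
  assumes g: "continuous_on {a..b} g" and "a < b" and u: "u \<in> {a..b}" and "c < g u"
  obtains t where "t \<in> {a<..<b}" "c < g t"
proof -
  obtain d where d: "d > 0" "\<forall>x\<in>{a..b}. dist x u < d \<longrightarrow> dist (g x) (g u) < g u - c"
    using g u \<open>c < g u\<close> unfolding continuous_on_iff by (metis diff_gt_0_iff_gt)
  have "u \<in> closure {a<..<b}" using u \<open>a < b\<close> by simp
  then obtain t where t: "t \<in> {a<..<b}" "dist t u < d"
    using d(1) by (auto simp: closure_approachable)
  then have "dist (g t) (g u) < g u - c" using d by auto
  then show ?thesis using that t by (auto simp: dist_real_def)
qed

locale barrier_path =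
  fixes f w :: "real \<Rightarrow> real"
  assumes cont_f: "continuous_on {-1..1} f" and cont_w: "continuous_on {-1..1} w"
    and f_0: "f 0 = 0"
begin

abbreviation gap :: "real \<Rightarrow> real" where "gap \<equiv> barrier_gap f w"
abbreviation left_max :: real where "left_max \<equiv> Sup (gap ` {-1..0})"
abbreviation right_max :: real where "right_max \<equiv> Sup (gap ` {0..1})"
abbreviation hits_minus :: bool where "hits_minus \<equiv> \<exists>t\<in>{0..<1}. left_max \<le> gap t"
abbreviation hits_plus :: bool where "hits_plus \<equiv> \<exists>t\<in>{-1<..0}. right_max \<le> gap t"

lemma continuous_on_gap: "S \<subseteq> {-1..1} \<Longrightarrow> continuous_on S gap"
  unfolding barrier_gap_def
  by (intro continuous_intros continuous_on_subset[OF cont_f] continuous_on_subset[OF cont_w]) auto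

lemma gap_0: "gap 0 = 0"
  by (simp add: barrier_gap_def f_0)

lemma gap_le_Sup: "-1 \<le> a \<Longrightarrow> b \<le> 1 \<Longrightarrow> u \<in> {a..b} \<Longrightarrow> gap u \<le> Sup (gap ` {a..b})"
  by (intro cSup_upper compact_imp_bounded[THEN bounded_imp_bdd_above]
      compact_continuous_image continuous_on_gap) auto

lemma gap_attains_Sup:
  assumes "-1 \<le> a" "a \<le> b" "b \<le> 1"
  obtains u where "u \<in> {a..b}" "gap u = Sup (gap ` {a..b})"
proof -
  obtain u where u: "u \<in> {a..b}" "\<forall>v\<in>{a..b}. gap v \<le> gap u"
    using continuous_attains_sup[OF compact_Icc _ continuous_on_gap[of "{a..b}"]] assms by auto
  have "Sup (gap ` {a..b}) = gap u"
    using u gap_le_Sup[of a b] assms by (intro antisym cSup_least) auto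
  then show ?thesis using that u by auto
qed

lemma left_max_nonneg: "0 \<le> left_max"
  using gap_le_Sup[of "-1" 0 0] gap_0 by simp

lemma right_max_nonneg: "0 \<le> right_max"
  using gap_le_Sup[of 0 1 0] gap_0 by simp

lemma sigma_minus_less_1_iff: "sigma_minus f w < 1 \<longleftrightarrow> hits_minus"
proof -
  have "refl_minus f w 0 = left_max"
    unfolding refl_minus_def barrier_gap_def by (intro arg_cong[where f=Sup] image_cong) auto
  then have hit: "free_minus f w t = f t \<longleftrightarrow> gap t = left_max" for t
    unfolding free_minus_def barrier_gap_def by auto
  have "sigma_minus f w < 1 \<longleftrightarrow> (\<exists>t\<in>{0..<1}. gap t = left_max)"
    unfolding sigma_minus_def Inf_less_iff using hit by auto
  also have "\<dots> \<longleftrightarrow> hits_minus"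
  proof
    assume hits_minus
    then obtain t where t: "t \<in> {0..<1}" "left_max \<le> gap t" by auto
    then obtain x where "0 \<le> x" "x \<le> t" "gap x = left_max"
      using IVT'[of gap 0 left_max t] left_max_nonneg gap_0 continuous_on_gap[of "{0..t}"] by auto
    then show "\<exists>t\<in>{0..<1}. gap t = left_max" using t by (intro bexI[of _ x]) auto
  qed (metis order_refl)
  finally show ?thesis .
qed

lemma sigma_plus_greater_iff: "sigma_plus f w > -1 \<longleftrightarrow> hits_plus"
proof -
  have "refl_plus f w 0 = right_max"
    unfolding refl_plus_def barrier_gap_def by (intro arg_cong[where f=Sup] image_cong) auto
  then have hit: "free_plus f w t = f t \<longleftrightarrow> gap t = right_max" for t
    unfolding free_plus_def barrier_gap_def by auto
  have "(- 1 :: ereal) = ereal (- 1)" by (simp add: one_ereal_def)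
  then have "- 1 < ereal t \<longleftrightarrow> - 1 < t" for t by simp
  then have "sigma_plus f w > -1 \<longleftrightarrow> (\<exists>t\<in>{-1<..0}. gap t = right_max)"
    unfolding sigma_plus_def less_Sup_iff using hit by (auto 4 3 intro: less_imp_le)
  also have "\<dots> \<longleftrightarrow> hits_plus"
  proof
    assume hits_plus
    then obtain t where t: "t \<in> {-1<..0}" "right_max \<le> gap t" by auto
    then obtain x where "t \<le> x" "x \<le> 0" "gap x = right_max"
      using IVT2'[of gap 0 right_max t] right_max_nonneg gap_0 continuous_on_gap[of "{t..0}"] by auto
    then show "\<exists>t\<in>{-1<..0}. gap t = right_max" using t by (intro bexI[of _ x]) auto
  qed (metis order_refl)
  finally show ?thesis .
qed

lemma hits_minus_iff_compact: "hits_minus \<longleftrightarrow> (\<exists>n::nat. left_max \<le> Sup (gap ` {0..1 - 1 / Suc n}))"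
proof
  assume hits_minus
  then obtain t where t: "0 \<le> t" "t < 1" "left_max \<le> gap t" by auto
  obtain n where "inverse (real (Suc n)) < 1 - t" using reals_Archimedean[of "1 - t"] t by auto
  then have "t \<le> 1 - 1 / Suc n" by (simp add: field_simps)
  then have "gap t \<le> Sup (gap ` {0..1 - 1 / Suc n})" using t by (intro gap_le_Sup) auto
  then show "\<exists>n::nat. left_max \<le> Sup (gap ` {0..1 - 1 / Suc n})" using t(3) by (meson order_trans)
next
  assume "\<exists>n::nat. left_max \<le> Sup (gap ` {0..1 - 1 / Suc n})"
  then obtain n :: nat where n: "left_max \<le> Sup (gap ` {0..1 - 1 / Suc n})" by auto
  obtain u where u: "u \<in> {0..1 - 1 / Suc n}" "gap u = Sup (gap ` {0..1 - 1 / Suc n})"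
    using gap_attains_Sup[of 0 "1 - 1 / Suc n"] by (auto simp: field_simps)
  have "0 < 1 / real (Suc n)" by simp
  then have "u < 1" using u(1) unfolding atLeastAtMost_iff by linarith
  then show hits_minus using u n by (intro bexI[of _ u]) auto
qed

lemma hits_plus_iff_compact: "hits_plus \<longleftrightarrow> (\<exists>n::nat. right_max \<le> Sup (gap ` {-1 + 1 / Suc n..0}))"
proof
  assume hits_plus
  then obtain t where t: "-1 < t" "t \<le> 0" "right_max \<le> gap t" by auto
  obtain n where "inverse (real (Suc n)) < 1 + t" using reals_Archimedean[of "1 + t"] t by auto
  then have "-1 + 1 / Suc n \<le> t" by (simp add: field_simps)
  then have "gap t \<le> Sup (gap ` {-1 + 1 / Suc n..0})" using t by (intro gap_le_Sup) (auto simp: field_simps)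
  then show "\<exists>n::nat. right_max \<le> Sup (gap ` {-1 + 1 / Suc n..0})" using t(3) by (meson order_trans)
next
  assume "\<exists>n::nat. right_max \<le> Sup (gap ` {-1 + 1 / Suc n..0})"
  then obtain n :: nat where n: "right_max \<le> Sup (gap ` {-1 + 1 / Suc n..0})" by auto
  obtain u where u: "u \<in> {-1 + 1 / Suc n..0}" "gap u = Sup (gap ` {-1 + 1 / Suc n..0})"
    using gap_attains_Sup[of "-1 + 1 / Suc n" 0] by (auto simp: field_simps)
  have "0 < 1 / real (Suc n)" by simp
  then have "-1 < u" using u(1) unfolding atLeastAtMost_iff by linarith
  then show hits_plus using u n by (intro bexI[of _ u]) auto
qed

lemma right_max_le_left_max: "\<not> hits_minus \<Longrightarrow> right_max \<le> left_max"
proof (rule ccontr)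
  assume "\<not> hits_minus" "\<not> right_max \<le> left_max"
  moreover obtain u where "u \<in> {0..1}" "gap u = right_max" using gap_attains_Sup[of 0 1] by auto
  ultimately obtain t where "t \<in> {0<..<1}" "left_max < gap t"
    using continuous_on_interior_above[OF continuous_on_gap, of 0 1 u left_max] by auto
  with \<open>\<not> hits_minus\<close> show False by (auto intro: less_imp_le)
qed

lemma left_max_le_right_max: "\<not> hits_plus \<Longrightarrow> left_max \<le> right_max"
proof (rule ccontr)
  assume "\<not> hits_plus" "\<not> left_max \<le> right_max"
  moreover obtain u where "u \<in> {-1..0}" "gap u = left_max" using gap_attains_Sup[of "-1" 0] by auto
  ultimately obtain t where "t \<in> {-1<..<0}" "right_max < gap t"
    using continuous_on_interior_above[OF continuous_on_gap, of "-1" 0 u right_max] by auto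
  with \<open>\<not> hits_plus\<close> show False by (auto intro: less_imp_le)
qed

lemma right_max_eq_gap_1:
  assumes "\<not> hits_minus" "left_max = right_max"
  shows "right_max = gap 1"
proof -
  obtain u where u: "u \<in> {0..1}" "gap u = right_max" using gap_attains_Sup[of 0 1] by auto
  then have "u = 1" using assms by (metis atLeastAtMost_iff atLeastLessThan_iff order_refl order_less_le)
  then show ?thesis using u by simp
qed

lemma left_max_eq_gap_neg1:
  assumes "\<not> hits_plus" "left_max = right_max"
  shows "left_max = gap (-1)"
proof -
  obtain u where u: "u \<in> {-1..0}" "gap u = left_max" using gap_attains_Sup[of "-1" 0] by auto
  then have "u = -1" using assms
    by (metis atLeastAtMost_iff greaterThanAtMost_iff order_refl order_less_le)
  then show ?thesis using u by simp
qed

lemma max_eq_if_hits: "hits_minus \<Longrightarrow> hits_plus \<Longrightarrow> left_max = right_max"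
proof -
  assume hits_minus hits_plus
  then obtain t u where "t \<in> {0..<1}" "left_max \<le> gap t" "u \<in> {-1<..0}" "right_max \<le> gap u"
    by auto
  moreover from this have "gap t \<le> right_max" "gap u \<le> left_max" by (auto intro: gap_le_Sup)
  ultimately show ?thesis by linarith
qed

lemma hitting_dichotomy:
  assumes "left_max \<noteq> gap 1" "right_max \<noteq> gap (-1)"
  shows "(hits_minus \<or> hits_plus) \<and> (hits_minus \<and> hits_plus \<longleftrightarrow> left_max = right_max)"
  using assms right_max_le_left_max left_max_le_right_max right_max_eq_gap_1
    left_max_eq_gap_neg1 max_eq_if_hits by force

end

section \<open>The hitting events as measurable sets of rational increments\<close>

definition rat_paths :: "(real \<Rightarrow> real) measure" where
  "rat_paths = PiM (rat_interval (-1) 1) (\<lambda>_. borel)"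

text \<open>Countably many coordinates that determine a continuous path up to an additive constant.\<close>
definition rat_increments :: "(real \<Rightarrow> real) \<Rightarrow> real \<Rightarrow> real" where
  "rat_increments w = (\<lambda>q\<in>rat_interval (-1) 1. w q - w (-1))"

definition rat_gap_sup :: "(real \<Rightarrow> real) \<Rightarrow> real \<Rightarrow> real \<Rightarrow> (real \<Rightarrow> real) \<Rightarrow> ereal" where
  "rat_gap_sup f a b x = (SUP q\<in>rat_interval a b. ereal (barrier_gap f x q))"

text \<open>The half-open interval [0,1) is exhausted by the compact intervals [0, 1 - 1/(n+1)], whose
  endpoints are rational.\<close>
definition hit_minus_event :: "(real \<Rightarrow> real) \<Rightarrow> (real \<Rightarrow> real) set" where
  "hit_minus_event f = {x \<in> space rat_paths.
     \<exists>n::nat. rat_gap_sup f (-1) 0 x \<le> rat_gap_sup f 0 (1 - 1 / Suc n) x}"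

definition hit_plus_event :: "(real \<Rightarrow> real) \<Rightarrow> (real \<Rightarrow> real) set" where
  "hit_plus_event f = {x \<in> space rat_paths.
     \<exists>n::nat. rat_gap_sup f 0 1 x \<le> rat_gap_sup f (-1 + 1 / Suc n) 0 x}"

definition tie_event :: "(real \<Rightarrow> real) \<Rightarrow> (real \<Rightarrow> real) set" where
  "tie_event f = {x \<in> space rat_paths. rat_gap_sup f (-1) 0 x = rat_gap_sup f 0 1 x}"

definition far_end_event :: "(real \<Rightarrow> real) \<Rightarrow> (real \<Rightarrow> real) set" where
  "far_end_event f = {x \<in> space rat_paths. rat_gap_sup f (-1) 0 x = ereal (barrier_gap f x 1) \<or>
     rat_gap_sup f 0 1 x = ereal (barrier_gap f x (-1))}"

lemma measurable_barrier_gap_rat_paths: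
  "q \<in> rat_interval (-1) 1 \<Longrightarrow> (\<lambda>x. barrier_gap f x q) \<in> borel_measurable rat_paths"
  using rat_interval_memI[of 0 "-1" 1] unfolding barrier_gap_def rat_paths_def by measurable

lemma measurable_rat_gap_sup:
  assumes "-1 \<le> a" "b \<le> 1"
  shows "rat_gap_sup f a b \<in> borel_measurable rat_paths"
  unfolding rat_gap_sup_def
proof (rule borel_measurable_SUP[OF countable_rat_interval])
  fix q assume "q \<in> rat_interval a b"
  then have "q \<in> rat_interval (-1) 1" using rat_interval_mono[OF assms] by blast
  then show "(\<lambda>x. ereal (barrier_gap f x q)) \<in> borel_measurable rat_paths"
    by (intro borel_measurable_ereal measurable_barrier_gap_rat_paths)
qed

lemma sets_hit_minus_event: "hit_minus_event f \<in> sets rat_paths"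
proof -
  have "hit_minus_event f = (\<Union>n::nat.
      {x \<in> space rat_paths. rat_gap_sup f (-1) 0 x \<le> rat_gap_sup f 0 (1 - 1 / Suc n) x})"
    unfolding hit_minus_event_def by auto
  also have "\<dots> \<in> sets rat_paths"
  proof -
    have "{x \<in> space rat_paths. rat_gap_sup f (-1) 0 x \<le> rat_gap_sup f 0 (1 - 1 / Suc n) x}
        \<in> sets rat_paths" for n
      by (intro borel_measurable_le measurable_rat_gap_sup) auto
    then show ?thesis by blast
  qed
  finally show ?thesis .
qed

lemma sets_hit_plus_event: "hit_plus_event f \<in> sets rat_paths"
proof -
  have "hit_plus_event f = (\<Union>n::nat.
      {x \<in> space rat_paths. rat_gap_sup f 0 1 x \<le> rat_gap_sup f (-1 + 1 / Suc n) 0 x})"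
    unfolding hit_plus_event_def by auto
  also have "\<dots> \<in> sets rat_paths"
  proof -
    have "{x \<in> space rat_paths. rat_gap_sup f 0 1 x \<le> rat_gap_sup f (-1 + 1 / Suc n) 0 x}
        \<in> sets rat_paths" for n
      by (intro borel_measurable_le measurable_rat_gap_sup) auto
    then show ?thesis by blast
  qed
  finally show ?thesis .
qed

lemma sets_tie_event: "tie_event f \<in> sets rat_paths"
  unfolding tie_event_def by (intro borel_measurable_eq measurable_rat_gap_sup) auto

lemma sets_far_end_event: "far_end_event f \<in> sets rat_paths"
  unfolding far_end_event_def
  by (intro sets.sets_Collect_disj borel_measurable_eq measurable_rat_gap_sup borel_measurable_ereal
      measurable_barrier_gap_rat_paths rat_interval_memI) auto

lemma barrier_gap_rat_increments:
  "q \<in> rat_interval (-1) 1 \<Longrightarrow> barrier_gap f (rat_increments w) q = barrier_gap f w q"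
  using rat_interval_memI[of 0 "-1" 1] by (simp add: barrier_gap_def rat_increments_def)

lemma rat_increments_space: "rat_increments w \<in> space rat_paths"
  by (simp add: rat_increments_def rat_paths_def space_PiM)

lemma rat_1_minus_inverse: "1 - 1 / real (Suc n) \<in> \<rat>" "-1 + 1 / real (Suc n) \<in> \<rat>"
  by simp_all

context barrier_path
begin

lemma rat_gap_sup_rat_increments:
  assumes "-1 \<le> a" "a \<le> b" "b \<le> 1" "a \<in> \<rat>" "b \<in> \<rat>"
  shows "rat_gap_sup f a b (rat_increments w) = ereal (Sup (gap ` {a..b}))"
proof -
  have "rat_gap_sup f a b (rat_increments w) = (SUP q\<in>rat_interval a b. ereal (gap q))"
    unfolding rat_gap_sup_def using rat_interval_mono[of "-1" a b 1] assms
    by (intro SUP_cong refl) (auto simp: barrier_gap_rat_increments)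
  also have "\<dots> = ereal (Sup (gap ` {a..b}))"
    using assms by (intro SUP_rat_interval_eq_Sup continuous_on_gap) auto
  finally show ?thesis .
qed

lemma rat_increments_in_hit_minus_event_iff:
  "rat_increments w \<in> hit_minus_event f \<longleftrightarrow> sigma_minus f w < 1"
  unfolding hit_minus_event_def sigma_minus_less_1_iff hits_minus_iff_compact
  using rat_increments_space rat_1_minus_inverse by (simp add: rat_gap_sup_rat_increments)

lemma rat_increments_in_hit_plus_event_iff:
  "rat_increments w \<in> hit_plus_event f \<longleftrightarrow> sigma_plus f w > -1"
  unfolding hit_plus_event_def sigma_plus_greater_iff hits_plus_iff_compact
  using rat_increments_space rat_1_minus_inverse by (simp add: rat_gap_sup_rat_increments)

lemma rat_increments_in_tie_event_iff:
  "rat_increments w \<in> tie_event f \<longleftrightarrow> left_max = right_max"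
  unfolding tie_event_def using rat_increments_space by (simp add: rat_gap_sup_rat_increments)

lemma rat_increments_in_far_end_event_iff:
  "rat_increments w \<in> far_end_event f \<longleftrightarrow> left_max = gap 1 \<or> right_max = gap (-1)"
  unfolding far_end_event_def using rat_increments_space rat_interval_memI[of _ "-1" 1]
  by (simp add: rat_gap_sup_rat_increments barrier_gap_rat_increments)

lemma rat_increments_dichotomy:
  assumes "rat_increments w \<notin> far_end_event f"
  shows "(rat_increments w \<in> hit_minus_event f \<or> rat_increments w \<in> hit_plus_event f) \<and>
    (rat_increments w \<in> hit_minus_event f \<and> rat_increments w \<in> hit_plus_event f \<longleftrightarrow>
     rat_increments w \<in> tie_event f)"
  using assms hitting_dichotomy
  unfolding rat_increments_in_hit_minus_event_iff rat_increments_in_hit_plus_event_iff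
    rat_increments_in_tie_event_iff rat_increments_in_far_end_event_iff
    sigma_minus_less_1_iff sigma_plus_greater_iff
  by blast

end

section \<open>Gaussian increments\<close>

definition gauss_increment :: "real \<Rightarrow> real list \<Rightarrow> nat \<Rightarrow> real measure" where
  "gauss_increment s ts i = density lborel (\<lambda>x. ennreal (normal_density 0 (s * sqrt (ts ! Suc i - ts ! i)) x))"

definition increments :: "real list \<Rightarrow> ('a \<Rightarrow> real \<Rightarrow> real) \<Rightarrow> 'a \<Rightarrow> nat \<Rightarrow> real" where
  "increments ts W \<omega> = (\<lambda>i\<in>{..<length ts - 1}. W \<omega> (ts ! Suc i) - W \<omega> (ts ! i))"

lemma prob_space_gauss_increment:
  "s > 0 \<Longrightarrow> sorted_wrt (<) ts \<Longrightarrow> i < length ts - 1 \<Longrightarrow> prob_space (gauss_increment s ts i)"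
  unfolding gauss_increment_def
  by (rule prob_space_normal_density) (auto simp: sorted_wrt_iff_nth_less)

lemma sets_gauss_increment [simp, measurable_cong]: "sets (gauss_increment s ts i) = sets borel"
  by (simp add: gauss_increment_def)

lemma measurable_increments:
  assumes "\<And>t. t \<in> set ts \<Longrightarrow> (\<lambda>\<omega>. W \<omega> t) \<in> borel_measurable M"
  shows "increments ts W \<in> measurable M (PiM {..<length ts - 1} (\<lambda>_. borel))"
  unfolding increments_def
  by (intro measurable_restrict borel_measurable_diff assms nth_mem) auto

lemma increments_in_PiE_iff:
  "increments ts W \<omega> \<in> PiE {..<length ts - 1} A \<longleftrightarrow>
   (\<forall>i<length ts - 1. W \<omega> (ts ! Suc i) - W \<omega> (ts ! i) \<in> A i)"
  unfolding increments_def restrict_PiE_iff by auto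

lemma distr_increments_BM:
  assumes bm: "BM_on M s a b W" and ts: "sorted_wrt (<) ts" "set ts \<subseteq> {a..b}" "2 \<le> length ts"
  shows "distr M (PiM {..<length ts - 1} (\<lambda>_. borel)) (increments ts W) =
    PiM {..<length ts - 1} (gauss_increment s ts)"
proof -
  interpret prob_space M using bm by (simp add: BM_on_def)
  let ?I = "{..<length ts - 1}" and ?X = "\<lambda>i \<omega>. W \<omega> (ts ! Suc i) - W \<omega> (ts ! i)"
  have "(\<lambda>\<omega>. W \<omega> t) \<in> borel_measurable M" if "t \<in> set ts" for t
    using bm that ts by (auto simp: BM_on_def)
  then have rv: "random_variable borel (?X i)" if "i \<in> ?I" for i
    using that by (intro borel_measurable_diff) auto
  have ind: "indep_vars (\<lambda>_. borel) ?X ?I"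
    and dist: "\<And>i. i \<in> ?I \<Longrightarrow> distributed M lborel (?X i)
      (\<lambda>x. ennreal (normal_density 0 (s * sqrt (ts ! Suc i - ts ! i)) x))"
    using bm ts by (auto simp: BM_on_def)
  have "0 \<in> ?I" using ts(3) by simp
  then have ne: "?I \<noteq> {}" by blast
  have "distr M (PiM ?I (\<lambda>_. borel)) (increments ts W) = PiM ?I (\<lambda>i. distr M borel (?X i))"
    using indep_vars_iff_distr_eq_PiM'[OF ne rv] ind unfolding increments_def by simp
  also have "\<dots> = PiM ?I (gauss_increment s ts)"
  proof (rule PiM_cong[OF refl])
    fix i assume "i \<in> ?I"
    have "distr M borel (?X i) = distr M lborel (?X i)" by (rule distr_cong) auto
    also have "\<dots> = gauss_increment s ts i"
      using distributed_distr_eq_density[OF dist[OF \<open>i \<in> ?I\<close>]] by (simp add: gauss_increment_def)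
    finally show "distr M borel (?X i) = gauss_increment s ts i" .
  qed
  finally show ?thesis .
qed

lemma emeasure_PiM_gauss_increment:
  assumes "s > 0" "sorted_wrt (<) ts" "\<And>i. i < length ts - 1 \<Longrightarrow> A i \<in> sets borel"
  shows "emeasure (PiM {..<length ts - 1} (gauss_increment s ts)) (PiE {..<length ts - 1} A) =
    (\<Prod>i<length ts - 1. emeasure (gauss_increment s ts i) (A i))"
proof -
  let ?I = "{..<length ts - 1}"
  have "prod_emb ?I (gauss_increment s ts) ?I (PiE ?I A) = PiE ?I A"
    using assms by (intro prod_emb_PiE_same_index) (auto simp: gauss_increment_def)
  moreover have "emeasure (PiM ?I (gauss_increment s ts)) (prod_emb ?I (gauss_increment s ts) ?I (PiE ?I A))
      = (\<Prod>i<length ts - 1. emeasure (gauss_increment s ts i) (A i))"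
    using assms by (intro emeasure_PiM_emb prob_space_gauss_increment) auto
  ultimately show ?thesis by simp
qed

lemma emeasure_increments_BM:
  assumes bm: "BM_on M s a b W" and "s > 0" and ts: "sorted_wrt (<) ts" "set ts \<subseteq> {a..b}" "2 \<le> length ts"
    and A: "\<And>i. i < length ts - 1 \<Longrightarrow> A i \<in> sets borel"
  shows "emeasure M {\<omega> \<in> space M. \<forall>i<length ts - 1. W \<omega> (ts ! Suc i) - W \<omega> (ts ! i) \<in> A i} =
    (\<Prod>i<length ts - 1. emeasure (gauss_increment s ts i) (A i))"
proof -
  let ?I = "{..<length ts - 1}"
  have meas: "increments ts W \<in> measurable M (PiM ?I (\<lambda>_. borel))"
    using bm ts by (intro measurable_increments) (auto simp: BM_on_def)
  have "{\<omega> \<in> space M. \<forall>i<length ts - 1. W \<omega> (ts ! Suc i) - W \<omega> (ts ! i) \<in> A i} =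
      increments ts W -` PiE ?I A \<inter> space M"
    using increments_in_PiE_iff[of ts W _ A] by blast
  also have "emeasure M \<dots> = emeasure (distr M (PiM ?I (\<lambda>_. borel)) (increments ts W)) (PiE ?I A)"
    using A by (intro emeasure_distr[symmetric] meas sets_PiM_I_finite) auto
  also have "\<dots> = (\<Prod>i<length ts - 1. emeasure (gauss_increment s ts i) (A i))"
    using distr_increments_BM[OF bm ts] emeasure_PiM_gauss_increment[OF \<open>s > 0\<close> ts(1) A] by simp
  finally show ?thesis .
qed

lemma emeasure_BM_increment_eq:
  assumes "BM_on M s a b W" "s > 0" "a \<le> t" "t < u" "u \<le> b"
  shows "emeasure M {\<omega> \<in> space M. W \<omega> u - W \<omega> t = r} = 0"
proof -
  have "emeasure M {\<omega> \<in> space M. \<forall>i<length [t, u] - 1. W \<omega> ([t, u] ! Suc i) - W \<omega> ([t, u] ! i) \<in> {r}} =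
      emeasure (gauss_increment s [t, u] 0) {r}"
    using emeasure_increments_BM[OF assms(1,2), of "[t, u]" "\<lambda>_. {r}"] assms by simp
  also have "\<dots> = 0"
  proof -
    have "AE x in lborel. x \<in> {r} \<longrightarrow> ennreal (normal_density 0 (s * sqrt (u - t)) x) = 0"
      using AE_lborel_singleton[of r] by eventually_elim auto
    then have "{r} \<in> null_sets (gauss_increment s [t, u] 0)"
      unfolding gauss_increment_def by (subst null_sets_density_iff) auto
    then show ?thesis by auto
  qed
  finally show ?thesis by simp
qed

text \<open>Partitions through -1, 0 and 1 suffice to determine the law of the rational increments, and
  for the two-sided process they are what lets every increment be read off one of B1, B2.\<close>
definition gaussian_increments :: "'a measure \<Rightarrow> real \<Rightarrow> ('a \<Rightarrow> real \<Rightarrow> real) \<Rightarrow> bool" where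
  "gaussian_increments M s W \<longleftrightarrow> prob_space M \<and>
     (\<forall>t\<in>{-1..1}. (\<lambda>\<omega>. W \<omega> t) \<in> borel_measurable M) \<and>
     (\<forall>ts. sorted_wrt (<) ts \<and> set ts \<subseteq> {-1..1} \<and> {-1, 0, 1} \<subseteq> set ts \<longrightarrow>
        distr M (PiM {..<length ts - 1} (\<lambda>_. borel)) (increments ts W) =
        PiM {..<length ts - 1} (gauss_increment s ts))"

lemma gaussian_increments_BM:
  assumes "BM_on M s (-1) 1 W"
  shows "gaussian_increments M s W"
  unfolding gaussian_increments_def
proof (intro conjI allI impI)
  show "prob_space M" "\<forall>t\<in>{-1..1}. (\<lambda>\<omega>. W \<omega> t) \<in> borel_measurable M"
    using assms by (auto simp: BM_on_def)
  fix ts :: "real list" assume ts: "sorted_wrt (<) ts \<and> set ts \<subseteq> {-1..1} \<and> {-1, 0, 1} \<subseteq> set ts"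
  have "card {-1, 1 :: real} \<le> length ts"
    using ts card_mono[of "set ts" "{-1, 1}"] card_length[of ts] by auto
  then show "distr M (PiM {..<length ts - 1} (\<lambda>_. borel)) (increments ts W) =
      PiM {..<length ts - 1} (gauss_increment s ts)"
    using distr_increments_BM[OF assms] ts by simp
qed

definition grid :: "real set \<Rightarrow> real list" where
  "grid J = sorted_list_of_set (J \<union> {-1, 0, 1})"

definition grid_index :: "real set \<Rightarrow> real \<Rightarrow> nat" where
  "grid_index J j = (SOME k. k < length (grid J) \<and> grid J ! k = j)"

lemma sorted_grid: "sorted_wrt (<) (grid J)"
  unfolding grid_def by (rule strict_sorted_list_of_set)

lemma set_grid: "finite J \<Longrightarrow> set (grid J) = J \<union> {-1, 0, 1}"
  unfolding grid_def by (rule set_sorted_list_of_set) simp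

lemma grid_nth_0:
  assumes "finite J" "J \<subseteq> {-1..1}"
  shows "grid J ! 0 = -1"
proof -
  have "grid J = Min (J \<union> {-1, 0, 1}) # sorted_list_of_set (J \<union> {-1, 0, 1} - {Min (J \<union> {-1, 0, 1})})"
    unfolding grid_def using assms(1) by (intro sorted_list_of_set_nonempty) auto
  moreover have "Min (J \<union> {-1, 0, 1}) = -1"
    using assms by (intro Min_eqI) auto
  ultimately show ?thesis by simp
qed

lemma grid_index:
  assumes "finite J" "j \<in> J"
  shows "grid_index J j < length (grid J)" "grid J ! grid_index J j = j"
proof -
  have "\<exists>k. k < length (grid J) \<and> grid J ! k = j"
    using assms set_grid by (metis UnI1 in_set_conv_nth)
  then show "grid_index J j < length (grid J)" "grid J ! grid_index J j = j"
    unfolding grid_index_def by (metis (mono_tags, lifting) someI_ex)+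
qed

lemma sum_increments_grid:
  assumes "finite J" "J \<subseteq> {-1..1}" "j \<in> J"
  shows "(\<Sum>i<grid_index J j. increments (grid J) W \<omega> i) = W \<omega> j - W \<omega> (-1)"
proof -
  have "(\<Sum>i<grid_index J j. increments (grid J) W \<omega> i) =
      (\<Sum>i<grid_index J j. W \<omega> (grid J ! Suc i) - W \<omega> (grid J ! i))"
    using grid_index[OF assms(1,3)] by (intro sum.cong refl) (auto simp: increments_def)
  also have "\<dots> = W \<omega> (grid J ! grid_index J j) - W \<omega> (grid J ! 0)"
    by (rule sum_lessThan_telescope)
  finally show ?thesis using grid_index[OF assms(1,3)] grid_nth_0[OF assms(1,2)] by simp
qed

definition partial_sum_event :: "real set \<Rightarrow> (real \<Rightarrow> real set) \<Rightarrow> (nat \<Rightarrow> real) set" where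
  "partial_sum_event J A = {d \<in> space (PiM {..<length (grid J) - 1} (\<lambda>_. borel)).
     \<forall>j\<in>J. (\<Sum>i<grid_index J j. d i) \<in> A j}"

lemma sets_partial_sum_event:
  assumes "finite J" "\<And>j. j \<in> J \<Longrightarrow> A j \<in> sets borel"
  shows "partial_sum_event J A \<in> sets (PiM {..<length (grid J) - 1} (\<lambda>_. borel))"
  unfolding partial_sum_event_def
proof (rule sets.sets_Collect_finite_All[OF _ assms(1)])
  fix j assume "j \<in> J"
  have component: "(\<lambda>d. d i) \<in> borel_measurable (PiM {..<length (grid J) - 1} (\<lambda>_. borel :: real measure))"
    if "i \<in> {..<grid_index J j}" for i
    using that grid_index(1)[OF assms(1) \<open>j \<in> J\<close>] by (intro measurable_component_singleton) auto
  have "(\<lambda>d. \<Sum>i\<in>{..<grid_index J j}. (\<lambda>i d. d i) i d)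
      \<in> borel_measurable (PiM {..<length (grid J) - 1} (\<lambda>_. borel :: real measure))"
    by (rule borel_measurable_sum) (rule component)
  then have "(\<lambda>d. \<Sum>i<grid_index J j. d i) \<in> borel_measurable (PiM {..<length (grid J) - 1} (\<lambda>_. borel :: real measure))"
    by simp
  from measurable_sets[OF this assms(2)[OF \<open>j \<in> J\<close>]]
  show "{d \<in> space (PiM {..<length (grid J) - 1} (\<lambda>_. borel)). (\<Sum>i<grid_index J j. d i) \<in> A j}
      \<in> sets (PiM {..<length (grid J) - 1} (\<lambda>_. borel))"
    by (simp add: vimage_def Int_def conj_commute)
qed

lemma emeasure_increments_from_left:
  assumes W: "gaussian_increments M s W" and J: "finite J" "J \<subseteq> {-1..1}"
    and A: "\<And>j. j \<in> J \<Longrightarrow> A j \<in> sets borel"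
  shows "emeasure M {\<omega> \<in> space M. \<forall>j\<in>J. W \<omega> j - W \<omega> (-1) \<in> A j} =
    emeasure (PiM {..<length (grid J) - 1} (gauss_increment s (grid J))) (partial_sum_event J A)"
proof -
  let ?P = "PiM {..<length (grid J) - 1} (\<lambda>_. borel :: real measure)"
  have grid_in: "set (grid J) \<subseteq> {-1..1}" using set_grid[OF J(1)] J(2) by auto
  have meas: "increments (grid J) W \<in> measurable M ?P"
    using W grid_in by (intro measurable_increments) (auto simp: gaussian_increments_def)
  have "{\<omega> \<in> space M. \<forall>j\<in>J. W \<omega> j - W \<omega> (-1) \<in> A j} =
      increments (grid J) W -` partial_sum_event J A \<inter> space M"
  proof -
    have "increments (grid J) W \<omega> \<in> space ?P" for \<omega>
      by (simp add: increments_def space_PiM)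
    moreover have "(\<forall>j\<in>J. W \<omega> j - W \<omega> (-1) \<in> A j) \<longleftrightarrow>
        (\<forall>j\<in>J. (\<Sum>i<grid_index J j. increments (grid J) W \<omega> i) \<in> A j)" for \<omega>
      using sum_increments_grid[OF J, of _ W \<omega>] by simp
    ultimately show ?thesis by (auto simp: partial_sum_event_def)
  qed
  also have "emeasure M \<dots> = emeasure (distr M ?P (increments (grid J) W)) (partial_sum_event J A)"
    by (intro emeasure_distr[symmetric] meas sets_partial_sum_event J(1) A)
  also have "distr M ?P (increments (grid J) W) = PiM {..<length (grid J) - 1} (gauss_increment s (grid J))"
    using W sorted_grid set_grid[OF J(1)] grid_in by (auto simp: gaussian_increments_def)
  finally show ?thesis .
qed

lemma measurable_rat_increments:
  "gaussian_increments M s W \<Longrightarrow> (\<lambda>\<omega>. rat_increments (W \<omega>)) \<in> measurable M rat_paths"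
  unfolding rat_increments_def rat_paths_def gaussian_increments_def
  by (intro measurable_restrict borel_measurable_diff) (auto simp: rat_interval_def)

lemma distr_rat_increments_eq:
  assumes W: "gaussian_increments M s W" and V: "gaussian_increments N s V"
  shows "distr M rat_paths (\<lambda>\<omega>. rat_increments (W \<omega>)) = distr N rat_paths (\<lambda>\<omega>. rat_increments (V \<omega>))"
proof -
  let ?Q = "rat_interval (-1) 1"
  have cylinder: "emeasure (distr K rat_paths (\<lambda>\<omega>. rat_increments (U \<omega>))) (prod_emb ?Q (\<lambda>_. borel) J (PiE J A))
      = emeasure (PiM {..<length (grid J) - 1} (gauss_increment s (grid J))) (partial_sum_event J A)"
    if U: "gaussian_increments K s U" and J: "finite J" "J \<subseteq> ?Q" and A: "\<And>j. j \<in> J \<Longrightarrow> A j \<in> sets borel"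
    for K :: "'c measure" and U J A
  proof -
    have "emeasure (distr K rat_paths (\<lambda>\<omega>. rat_increments (U \<omega>))) (prod_emb ?Q (\<lambda>_. borel) J (PiE J A))
        = emeasure K ((\<lambda>\<omega>. rat_increments (U \<omega>)) -` prod_emb ?Q (\<lambda>_. borel) J (PiE J A) \<inter> space K)"
      using J A by (intro emeasure_distr measurable_rat_increments[OF U])
        (auto simp: rat_paths_def intro!: sets_PiM_I)
    also have "(\<lambda>\<omega>. rat_increments (U \<omega>)) -` prod_emb ?Q (\<lambda>_. borel) J (PiE J A) \<inter> space K
        = {\<omega> \<in> space K. \<forall>j\<in>J. U \<omega> j - U \<omega> (-1) \<in> A j}"
      using J by (auto simp: prod_emb_def rat_increments_def PiE_iff subset_iff)
    also have "emeasure K \<dots> = emeasure (PiM {..<length (grid J) - 1} (gauss_increment s (grid J))) (partial_sum_event J A)"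
      using J rat_interval_subset by (intro emeasure_increments_from_left[OF U _ _ A]) auto
    finally show ?thesis .
  qed
  interpret prob_space M using W by (simp add: gaussian_increments_def)
  show ?thesis
  proof (rule measure_eqI_PiM_infinite[where I="?Q" and M="\<lambda>_. borel"])
    show "finite_measure (distr M rat_paths (\<lambda>\<omega>. rat_increments (W \<omega>)))"
      using prob_space_distr[OF measurable_rat_increments[OF W]] by (simp add: prob_space_def)
  next
    fix J A assume "finite J" "J \<subseteq> ?Q" "\<And>j. j \<in> J \<Longrightarrow> A j \<in> sets (borel :: real measure)"
    then show "emeasure (distr M rat_paths (\<lambda>\<omega>. rat_increments (W \<omega>))) (prod_emb ?Q (\<lambda>_. borel) J (PiE J A)) =
        emeasure (distr N rat_paths (\<lambda>\<omega>. rat_increments (V \<omega>))) (prod_emb ?Q (\<lambda>_. borel) J (PiE J A))"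
      using cylinder[OF W] cylinder[OF V] by simp
  qed (simp_all add: rat_paths_def)
qed

section \<open>The two-sided process\<close>

lemma sets_increment_conditions:
  fixes A :: "'i \<Rightarrow> real set"
  assumes "finite S" "\<And>i. i \<in> S \<Longrightarrow> u i \<in> {0..1} \<and> v i \<in> {0..1}" "\<And>i. i \<in> S \<Longrightarrow> A i \<in> sets borel"
  shows "{x \<in> space (PiM {0..1} (\<lambda>_. borel)). \<forall>i\<in>S. x (u i) - x (v i) \<in> A i} \<in> sets (PiM {0..1::real} (\<lambda>_. borel))"
proof (rule sets.sets_Collect_finite_All[OF _ assms(1)])
  fix i assume "i \<in> S"
  have "(\<lambda>x. x (u i) - x (v i)) \<in> borel_measurable (PiM {0..1::real} (\<lambda>_. borel :: real measure))"
    using assms(2)[OF \<open>i \<in> S\<close>] by (intro borel_measurable_diff measurable_component_singleton) auto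
  from measurable_sets[OF this assms(3)[OF \<open>i \<in> S\<close>]]
  show "{x \<in> space (PiM {0..1} (\<lambda>_. borel)). x (u i) - x (v i) \<in> A i} \<in> sets (PiM {0..1::real} (\<lambda>_. borel))"
    by (simp add: vimage_def Int_def conj_commute)
qed

lemma set_reflected_prefix:
  fixes ts :: "real list"
  assumes "sorted_wrt (<) ts" "set ts \<subseteq> {-1..1}" "m < length ts" "ts ! m = 0"
  shows "set (rev (map uminus (take (Suc m) ts))) \<subseteq> {0..1}"
proof -
  have "x \<in> {-1..0}" if x: "x \<in> set (take (Suc m) ts)" for x
  proof -
    obtain j where "j < length (take (Suc m) ts)" "take (Suc m) ts ! j = x"
      using x unfolding in_set_conv_nth by blast
    then have "j \<le> m" "x = ts ! j" by auto
    moreover from this have "ts ! j \<in> {-1..1}" using assms(2,3) by (intro subsetD[OF assms(2)] nth_mem) auto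
    ultimately show ?thesis using assms
      sorted_nth_mono[OF strict_sorted_imp_sorted[OF assms(1)], of j m] by auto
  qed
  then show ?thesis by auto
qed

lemma set_suffix_from_0:
  fixes ts :: "real list"
  assumes "sorted_wrt (<) ts" "set ts \<subseteq> {-1..1}" "m < length ts" "ts ! m = 0"
  shows "set (drop m ts) \<subseteq> {0..1}"
proof
  fix x assume "x \<in> set (drop m ts)"
  then obtain j where "j < length (drop m ts)" "drop m ts ! j = x" unfolding in_set_conv_nth by blast
  then have "m + j < length ts" "x = ts ! (m + j)" by auto
  moreover from this have "ts ! (m + j) \<in> {-1..1}" by (intro subsetD[OF assms(2)] nth_mem)
  ultimately show "x \<in> {0..1}" using assms
    sorted_nth_mono[OF strict_sorted_imp_sorted[OF assms(1)], of m "m + j"] by auto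
qed

lemma all_less_rev_iff: "(\<forall>j<m. P (m - Suc j)) \<longleftrightarrow> (\<forall>i<m. P (i :: nat))"
proof
  assume h: "\<forall>j<m. P (m - Suc j)"
  show "\<forall>i<m. P i"
  proof (intro allI impI)
    fix i assume "i < m"
    then have "m - Suc (m - Suc i) = i" "m - Suc i < m" by auto
    then show "P i" using h by metis
  qed
qed auto

lemma all_atLeastLessThan_shift_iff: "(\<forall>j<n - m. P (m + j)) \<longleftrightarrow> (\<forall>i\<in>{m..<n}. P (i :: nat))"
proof
  assume h: "\<forall>j<n - m. P (m + j)"
  show "\<forall>i\<in>{m..<n}. P i"
  proof
    fix i assume "i \<in> {m..<n}"
    then have "m + (i - m) = i" "i - m < n - m" by auto
    then show "P i" using h by metis
  qed
qed auto

text \<open>Reversing and negating B1 makes the maximal gap over [-1,0] the first term of Z and the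
  maximal gap over [0,1] minus the second.\<close>
definition two_sided :: "('c \<Rightarrow> real \<Rightarrow> real) \<Rightarrow> ('c \<Rightarrow> real \<Rightarrow> real) \<Rightarrow> 'c \<Rightarrow> real \<Rightarrow> real" where
  "two_sided B1 B2 \<omega> t = (if t \<le> 0 then - B1 \<omega> (-t) else B2 \<omega> t)"

locale two_sided_BM =
  fixes M :: "'c measure" and s :: real and B1 B2 :: "'c \<Rightarrow> real \<Rightarrow> real"
  assumes s_pos: "s > 0" and BM1: "BM_on M s 0 1 B1" and BM2: "BM_on M s 0 1 B2"
    and start_0: "\<forall>\<omega>\<in>space M. B1 \<omega> 0 = 0 \<and> B2 \<omega> 0 = 0"
    and indep: "prob_space.indep_var M
      (PiM {0..1} (\<lambda>_. borel)) (\<lambda>\<omega>. restrict (B1 \<omega>) {0..1})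
      (PiM {0..1} (\<lambda>_. borel)) (\<lambda>\<omega>. restrict (B2 \<omega>) {0..1})"
begin

sublocale prob_space M
  using BM1 by (simp add: BM_on_def)

abbreviation V :: "'c \<Rightarrow> real \<Rightarrow> real" where "V \<equiv> two_sided B1 B2"

lemma measurable_two_sided: "t \<in> {-1..1} \<Longrightarrow> (\<lambda>\<omega>. V \<omega> t) \<in> borel_measurable M"
  using BM1 BM2 unfolding two_sided_def BM_on_def by (cases "t \<le> 0") auto

lemma continuous_two_sided:
  assumes "\<omega> \<in> space M"
  shows "continuous_on {-1..1} (V \<omega>)"
proof -
  have c: "continuous_on {0..1} (B1 \<omega>)" "continuous_on {0..1} (B2 \<omega>)"
    using BM1 BM2 assms by (auto simp: BM_on_def)
  have "continuous_on {-1..1} (\<lambda>x. if x \<le> 0 then - B1 \<omega> (-x) else B2 \<omega> x)"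
  proof (rule continuous_on_cases_le[where h="\<lambda>x. x"])
    show "continuous_on {x \<in> {-1..1}. x \<le> 0} (\<lambda>x. - B1 \<omega> (- x))"
      by (intro continuous_intros continuous_on_compose2[OF c(1)]) auto
    show "continuous_on {x \<in> {-1..1}. 0 \<le> x} (B2 \<omega>)"
      by (rule continuous_on_subset[OF c(2)]) auto
  qed (use start_0 assms in auto)
  then show ?thesis unfolding two_sided_def by simp
qed

lemma emeasure_indep_paths:
  assumes C1: "C1 \<in> sets (PiM {0..1} (\<lambda>_. borel))" and C2: "C2 \<in> sets (PiM {0..1} (\<lambda>_. borel))"
  shows "emeasure M {\<omega> \<in> space M. restrict (B1 \<omega>) {0..1} \<in> C1 \<and> restrict (B2 \<omega>) {0..1} \<in> C2} =
    emeasure M {\<omega> \<in> space M. restrict (B1 \<omega>) {0..1} \<in> C1} *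
    emeasure M {\<omega> \<in> space M. restrict (B2 \<omega>) {0..1} \<in> C2}"
proof -
  have "prob {\<omega> \<in> space M. restrict (B1 \<omega>) {0..1} \<in> C1 \<and> restrict (B2 \<omega>) {0..1} \<in> C2} =
    prob {\<omega> \<in> space M. restrict (B1 \<omega>) {0..1} \<in> C1} * prob {\<omega> \<in> space M. restrict (B2 \<omega>) {0..1} \<in> C2}"
    using indep_varD[OF indep C1 C2] by (simp add: vimage_def Int_def conj_commute)
  then show ?thesis by (simp add: emeasure_eq_measure ennreal_mult)
qed

lemma emeasure_left_increments:
  assumes ts: "sorted_wrt (<) ts" "set ts \<subseteq> {-1..1}" and m: "m < length ts" "ts ! m = 0" "0 < m"
    and A: "\<And>i. i < m \<Longrightarrow> A i \<in> sets borel"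
  shows "emeasure M {\<omega> \<in> space M. \<forall>i<m. B1 \<omega> (- ts ! i) - B1 \<omega> (- ts ! Suc i) \<in> A i} =
    (\<Prod>i<m. emeasure (gauss_increment s ts i) (A i))"
proof -
  define L where "L = rev (map uminus (take (Suc m) ts))"
  have len: "length L = Suc m" using m by (simp add: L_def)
  have L_nth: "L ! j = - ts ! (m - j)" if "j \<le> m" for j
    using that m by (simp add: L_def rev_nth)
  have sorted_L: "sorted_wrt (<) L" using ts(1) by (simp add: L_def sorted_wrt_rev sorted_wrt_map)
  have set_L: "set L \<subseteq> {0..1}" unfolding L_def by (rule set_reflected_prefix[OF ts m(1,2)])
  have "emeasure M {\<omega> \<in> space M. \<forall>j<length L - 1. B1 \<omega> (L ! Suc j) - B1 \<omega> (L ! j) \<in> A (m - Suc j)} =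
      (\<Prod>j<length L - 1. emeasure (gauss_increment s L j) (A (m - Suc j)))"
    by (rule emeasure_increments_BM[OF BM1 s_pos sorted_L set_L]) (use len A m(3) in auto)
  also have "{\<omega> \<in> space M. \<forall>j<length L - 1. B1 \<omega> (L ! Suc j) - B1 \<omega> (L ! j) \<in> A (m - Suc j)} =
      {\<omega> \<in> space M. \<forall>i<m. B1 \<omega> (- ts ! i) - B1 \<omega> (- ts ! Suc i) \<in> A i}"
  proof -
    have "(\<forall>j<m. B1 \<omega> (L ! Suc j) - B1 \<omega> (L ! j) \<in> A (m - Suc j)) \<longleftrightarrow>
        (\<forall>i<m. B1 \<omega> (- ts ! i) - B1 \<omega> (- ts ! Suc i) \<in> A i)" for \<omega>
    proof -
      have "(\<forall>j<m. B1 \<omega> (L ! Suc j) - B1 \<omega> (L ! j) \<in> A (m - Suc j)) \<longleftrightarrow>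
          (\<forall>j<m. B1 \<omega> (- ts ! (m - Suc j)) - B1 \<omega> (- ts ! Suc (m - Suc j)) \<in> A (m - Suc j))"
        by (intro all_cong) (simp add: L_nth Suc_diff_Suc)
      also have "\<dots> \<longleftrightarrow> (\<forall>i<m. B1 \<omega> (- ts ! i) - B1 \<omega> (- ts ! Suc i) \<in> A i)"
        by (rule all_less_rev_iff)
      finally show ?thesis .
    qed
    then show ?thesis using len by simp
  qed
  also have "(\<Prod>j<length L - 1. emeasure (gauss_increment s L j) (A (m - Suc j))) =
      (\<Prod>j<m. emeasure (gauss_increment s ts (m - Suc j)) (A (m - Suc j)))"
  proof (intro prod.cong refl)
    fix j assume "j \<in> {..<m}"
    then have "L ! Suc j - L ! j = ts ! Suc (m - Suc j) - ts ! (m - Suc j)"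
      by (simp add: L_nth Suc_diff_Suc)
    then show "emeasure (gauss_increment s L j) (A (m - Suc j)) =
        emeasure (gauss_increment s ts (m - Suc j)) (A (m - Suc j))"
      by (simp add: gauss_increment_def)
  qed (simp add: len)
  also have "\<dots> = (\<Prod>i<m. emeasure (gauss_increment s ts i) (A i))"
    by (rule prod.nat_diff_reindex)
  finally show ?thesis .
qed

lemma emeasure_right_increments:
  assumes ts: "sorted_wrt (<) ts" "set ts \<subseteq> {-1..1}" and m: "m < length ts - 1" "ts ! m = 0"
    and A: "\<And>i. i \<in> {m..<length ts - 1} \<Longrightarrow> A i \<in> sets borel"
  shows "emeasure M {\<omega> \<in> space M. \<forall>i\<in>{m..<length ts - 1}. B2 \<omega> (ts ! Suc i) - B2 \<omega> (ts ! i) \<in> A i} =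
    (\<Prod>i\<in>{m..<length ts - 1}. emeasure (gauss_increment s ts i) (A i))"
proof -
  define L where "L = drop m ts"
  have len: "length L - 1 = length ts - 1 - m" and L_nth: "\<And>j. L ! j = ts ! (m + j)"
    using m by (simp_all add: L_def)
  have sorted_L: "sorted_wrt (<) L" using ts(1) by (simp add: L_def)
  have set_L: "set L \<subseteq> {0..1}" unfolding L_def by (rule set_suffix_from_0[OF ts _ m(2)]) (use m in simp)
  have "emeasure M {\<omega> \<in> space M. \<forall>j<length L - 1. B2 \<omega> (L ! Suc j) - B2 \<omega> (L ! j) \<in> A (m + j)} =
      (\<Prod>j<length L - 1. emeasure (gauss_increment s L j) (A (m + j)))"
    by (rule emeasure_increments_BM[OF BM2 s_pos sorted_L set_L]) (use len m A in auto)
  also have "{\<omega> \<in> space M. \<forall>j<length L - 1. B2 \<omega> (L ! Suc j) - B2 \<omega> (L ! j) \<in> A (m + j)} =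
      {\<omega> \<in> space M. \<forall>i\<in>{m..<length ts - 1}. B2 \<omega> (ts ! Suc i) - B2 \<omega> (ts ! i) \<in> A i}"
  proof -
    have "(\<forall>j<length ts - 1 - m. B2 \<omega> (ts ! Suc (m + j)) - B2 \<omega> (ts ! (m + j)) \<in> A (m + j)) \<longleftrightarrow>
        (\<forall>i\<in>{m..<length ts - 1}. B2 \<omega> (ts ! Suc i) - B2 \<omega> (ts ! i) \<in> A i)" for \<omega>
      by (rule all_atLeastLessThan_shift_iff)
    then show ?thesis unfolding len L_nth by simp
  qed
  also have "(\<Prod>j<length L - 1. emeasure (gauss_increment s L j) (A (m + j))) =
      (\<Prod>i\<in>{m..<length ts - 1}. emeasure (gauss_increment s ts i) (A i))"
    unfolding len prod.atLeastLessThan_shift_0[of _ m] by (simp add: gauss_increment_def L_nth lessThan_atLeast0)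
  finally show ?thesis .
qed


lemma two_sided_increment_left: "t \<le> 0 \<Longrightarrow> u \<le> 0 \<Longrightarrow> V \<omega> u - V \<omega> t = B1 \<omega> (- t) - B1 \<omega> (- u)"
  by (simp add: two_sided_def)

lemma two_sided_increment_right:
  "\<omega> \<in> space M \<Longrightarrow> 0 \<le> t \<Longrightarrow> 0 \<le> u \<Longrightarrow> V \<omega> u - V \<omega> t = B2 \<omega> u - B2 \<omega> t"
  using start_0 by (auto simp: two_sided_def)

lemma two_sided_increments_iff:
  assumes \<omega>: "\<omega> \<in> space M" and "m < length ts - 1"
    and neg: "\<And>i. i \<le> m \<Longrightarrow> ts ! i \<le> 0" and pos: "\<And>i. m \<le> i \<Longrightarrow> i < length ts \<Longrightarrow> 0 \<le> ts ! i"
  shows "(\<forall>i<length ts - 1. V \<omega> (ts ! Suc i) - V \<omega> (ts ! i) \<in> A i) \<longleftrightarrow>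
    (\<forall>i<m. B1 \<omega> (- ts ! i) - B1 \<omega> (- ts ! Suc i) \<in> A i) \<and>
    (\<forall>i\<in>{m..<length ts - 1}. B2 \<omega> (ts ! Suc i) - B2 \<omega> (ts ! i) \<in> A i)"
proof -
  have "(\<forall>i<length ts - 1. V \<omega> (ts ! Suc i) - V \<omega> (ts ! i) \<in> A i) \<longleftrightarrow>
      (\<forall>i<m. V \<omega> (ts ! Suc i) - V \<omega> (ts ! i) \<in> A i) \<and>
      (\<forall>i\<in>{m..<length ts - 1}. V \<omega> (ts ! Suc i) - V \<omega> (ts ! i) \<in> A i)"
    using \<open>m < length ts - 1\<close> by (auto simp: not_less)
  moreover have "(\<forall>i<m. V \<omega> (ts ! Suc i) - V \<omega> (ts ! i) \<in> A i) \<longleftrightarrow>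
      (\<forall>i<m. B1 \<omega> (- ts ! i) - B1 \<omega> (- ts ! Suc i) \<in> A i)"
    using neg by (simp add: two_sided_increment_left Suc_leI)
  moreover have "(\<forall>i\<in>{m..<length ts - 1}. V \<omega> (ts ! Suc i) - V \<omega> (ts ! i) \<in> A i) \<longleftrightarrow>
      (\<forall>i\<in>{m..<length ts - 1}. B2 \<omega> (ts ! Suc i) - B2 \<omega> (ts ! i) \<in> A i)"
  proof (intro ball_cong refl)
    fix i assume "i \<in> {m..<length ts - 1}"
    then have "0 \<le> ts ! i" "0 \<le> ts ! Suc i" using pos by auto
    then show "V \<omega> (ts ! Suc i) - V \<omega> (ts ! i) \<in> A i \<longleftrightarrow> B2 \<omega> (ts ! Suc i) - B2 \<omega> (ts ! i) \<in> A i"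
      using two_sided_increment_right[OF \<omega>] by simp
  qed
  ultimately show ?thesis by blast
qed

text \<open>Increments left of 0 only see B1 and those right of 0 only see B2, so independence of B1
  and B2 factorises the joint law.\<close>
lemma emeasure_two_sided_increments:
  assumes ts: "sorted_wrt (<) ts" "set ts \<subseteq> {-1..1}"
    and m: "0 < m" "m < length ts - 1" "ts ! m = 0"
    and A: "\<And>i. i < length ts - 1 \<Longrightarrow> A i \<in> sets borel"
  shows "emeasure M {\<omega> \<in> space M. \<forall>i<length ts - 1. V \<omega> (ts ! Suc i) - V \<omega> (ts ! i) \<in> A i} =
    (\<Prod>i<length ts - 1. emeasure (gauss_increment s ts i) (A i))"
proof -
  let ?n = "length ts"
  have mono: "i \<le> j \<Longrightarrow> j < ?n \<Longrightarrow> ts ! i \<le> ts ! j" for i j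
    using sorted_nth_mono[OF strict_sorted_imp_sorted[OF ts(1)]] .
  have in_range: "i < ?n \<Longrightarrow> ts ! i \<in> {-1..1}" for i using ts(2) nth_mem by blast
  have neg: "i \<le> m \<Longrightarrow> ts ! i \<le> 0" and pos: "m \<le> i \<Longrightarrow> i < ?n \<Longrightarrow> 0 \<le> ts ! i" for i
    using mono[of i m] mono[of m i] m by auto
  define C1 where "C1 = {x \<in> space (PiM {0..1} (\<lambda>_. borel)). \<forall>i\<in>{..<m}. x (- ts ! i) - x (- ts ! Suc i) \<in> A i}"
  define C2 where "C2 = {x \<in> space (PiM {0..1} (\<lambda>_. borel)). \<forall>i\<in>{m..<?n - 1}. x (ts ! Suc i) - x (ts ! i) \<in> A i}"
  have C1: "C1 \<in> sets (PiM {0..1} (\<lambda>_. borel))"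
    unfolding C1_def using in_range neg m A by (intro sets_increment_conditions) (auto intro!: Suc_leI)
  have C2: "C2 \<in> sets (PiM {0..1} (\<lambda>_. borel))"
    unfolding C2_def using in_range pos A by (intro sets_increment_conditions) auto
  have left: "restrict (B1 \<omega>) {0..1} \<in> C1 \<longleftrightarrow> (\<forall>i<m. B1 \<omega> (- ts ! i) - B1 \<omega> (- ts ! Suc i) \<in> A i)" for \<omega>
    unfolding C1_def using in_range neg m by (auto simp: space_PiM intro!: Suc_leI)
  have right: "restrict (B2 \<omega>) {0..1} \<in> C2 \<longleftrightarrow>
      (\<forall>i\<in>{m..<?n - 1}. B2 \<omega> (ts ! Suc i) - B2 \<omega> (ts ! i) \<in> A i)" for \<omega>
    unfolding C2_def using in_range pos by (auto simp: space_PiM)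
  have "emeasure M {\<omega> \<in> space M. \<forall>i<?n - 1. V \<omega> (ts ! Suc i) - V \<omega> (ts ! i) \<in> A i} =
      emeasure M {\<omega> \<in> space M. restrict (B1 \<omega>) {0..1} \<in> C1 \<and> restrict (B2 \<omega>) {0..1} \<in> C2}"
    unfolding left right
    by (intro arg_cong[where f="emeasure M"] Collect_cong conj_cong refl
        two_sided_increments_iff[OF _ m(2) neg pos])
  also have "\<dots> = emeasure M {\<omega> \<in> space M. restrict (B1 \<omega>) {0..1} \<in> C1} *
      emeasure M {\<omega> \<in> space M. restrict (B2 \<omega>) {0..1} \<in> C2}"
    by (rule emeasure_indep_paths[OF C1 C2])
  also have "emeasure M {\<omega> \<in> space M. restrict (B1 \<omega>) {0..1} \<in> C1} =
      (\<Prod>i<m. emeasure (gauss_increment s ts i) (A i))"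
    unfolding left using m A by (intro emeasure_left_increments[OF ts]) auto
  also have "emeasure M {\<omega> \<in> space M. restrict (B2 \<omega>) {0..1} \<in> C2} =
      (\<Prod>i\<in>{m..<?n - 1}. emeasure (gauss_increment s ts i) (A i))"
    unfolding right using m A by (intro emeasure_right_increments[OF ts]) auto
  also have "(\<Prod>i<m. emeasure (gauss_increment s ts i) (A i)) *
      (\<Prod>i\<in>{m..<?n - 1}. emeasure (gauss_increment s ts i) (A i)) =
      (\<Prod>i<?n - 1. emeasure (gauss_increment s ts i) (A i))"
    using m by (simp add: lessThan_atLeast0 prod.atLeastLessThan_concat)
  finally show ?thesis .
qed

lemma sorted_through_0:
  assumes "sorted_wrt (<) ts" "{-1, 0, 1 :: real} \<subseteq> set ts"
  obtains m where "0 < m" "m < length ts - 1" "ts ! m = 0"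
proof -
  obtain m k1 k2 where m: "m < length ts" "ts ! m = 0"
    and k1: "k1 < length ts" "ts ! k1 = -1" and k2: "k2 < length ts" "ts ! k2 = 1"
    using assms(2) by (metis insert_subset in_set_conv_nth)
  have mono: "i \<le> j \<Longrightarrow> j < length ts \<Longrightarrow> ts ! i \<le> ts ! j" for i j
    using sorted_nth_mono[OF strict_sorted_imp_sorted[OF assms(1)]] .
  have "0 < m" using mono[of m k1] k1 m by (cases "k1 < m") auto
  moreover have "m < length ts - 1" using mono[of k2 m] k2 m by (cases "m < k2") auto
  ultimately show ?thesis using that m by blast
qed

lemma gaussian_increments_two_sided: "gaussian_increments M s V"
  unfolding gaussian_increments_def
proof (intro conjI allI impI ballI)
  show "prob_space M" by (rule prob_space_axioms)
  show "\<And>t. t \<in> {-1..1} \<Longrightarrow> (\<lambda>\<omega>. V \<omega> t) \<in> borel_measurable M" by (rule measurable_two_sided)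
  fix ts :: "real list" assume "sorted_wrt (<) ts \<and> set ts \<subseteq> {-1..1} \<and> {-1, 0, 1} \<subseteq> set ts"
  then have ts: "sorted_wrt (<) ts" "set ts \<subseteq> {-1..1}" and through: "{-1, 0, 1} \<subseteq> set ts" by auto
  obtain m where m: "0 < m" "m < length ts - 1" "ts ! m = 0" using sorted_through_0[OF ts(1) through] .
  let ?I = "{..<length ts - 1}"
  have meas: "increments ts V \<in> measurable M (PiM ?I (\<lambda>_. borel))"
    using measurable_increments[of ts V M] measurable_two_sided ts(2) by blast
  show "distr M (PiM ?I (\<lambda>_. borel)) (increments ts V) = PiM ?I (gauss_increment s ts)"
  proof (rule measure_eqI_PiM_finite[where I="?I" and M="\<lambda>_. borel" and A="\<lambda>_. space (PiM ?I (\<lambda>_. borel))"])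
    show "sets (PiM ?I (gauss_increment s ts)) = sets (PiM ?I (\<lambda>_. borel))" by (intro sets_PiM_cong) auto
    show "range (\<lambda>_. space (PiM ?I (\<lambda>_. borel))) \<subseteq> prod_algebra ?I (\<lambda>_. borel)"
      using space_in_prod_algebra[of ?I "\<lambda>_. borel"] by (auto simp: space_PiM)
    show "emeasure (distr M (PiM ?I (\<lambda>_. borel)) (increments ts V)) (space (PiM ?I (\<lambda>_. borel))) \<noteq> \<infinity>"
      for i :: nat
      using prob_space.emeasure_space_1[OF prob_space_distr[OF meas]] by simp
  next
    fix A :: "nat \<Rightarrow> real set" assume A: "\<And>i. i \<in> ?I \<Longrightarrow> A i \<in> sets borel"
    have "emeasure (distr M (PiM ?I (\<lambda>_. borel)) (increments ts V)) (PiE ?I A) =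
        emeasure M {\<omega> \<in> space M. \<forall>i<length ts - 1. V \<omega> (ts ! Suc i) - V \<omega> (ts ! i) \<in> A i}"
    proof -
      have "increments ts V -` PiE ?I A \<inter> space M =
          {\<omega> \<in> space M. \<forall>i<length ts - 1. V \<omega> (ts ! Suc i) - V \<omega> (ts ! i) \<in> A i}"
        using increments_in_PiE_iff[of ts V _ A] by blast
      moreover have "emeasure (distr M (PiM ?I (\<lambda>_. borel)) (increments ts V)) (PiE ?I A) =
          emeasure M (increments ts V -` PiE ?I A \<inter> space M)"
        using A by (intro emeasure_distr meas sets_PiM_I_finite) auto
      ultimately show ?thesis by simp
    qed
    also have "\<dots> = (\<Prod>i<length ts - 1. emeasure (gauss_increment s ts i) (A i))"
      by (rule emeasure_two_sided_increments[OF ts m]) (use A in auto)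
    also have "\<dots> = emeasure (PiM ?I (gauss_increment s ts)) (PiE ?I A)"
      by (rule emeasure_PiM_gauss_increment[OF s_pos ts(1), symmetric]) (use A in auto)
    finally show "emeasure (distr M (PiM ?I (\<lambda>_. borel)) (increments ts V)) (PiE ?I A) =
        emeasure (PiM ?I (gauss_increment s ts)) (PiE ?I A)" .
  qed simp_all
qed

end

section \<open>The barrier along the two-sided process\<close>

lemma (in prob_space) indep_var_eq_null:
  fixes X Y :: "'a \<Rightarrow> 'b :: {second_countable_topology, t2_space}"
  assumes indep: "indep_var borel X borel Y"
    and atomless: "(\<forall>c. emeasure M {\<omega> \<in> space M. X \<omega> = c} = 0) \<or> (\<forall>c. emeasure M {\<omega> \<in> space M. Y \<omega> = c} = 0)"
  shows "{\<omega> \<in> space M. X \<omega> = Y \<omega>} \<in> null_sets M"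
proof -
  have X: "random_variable borel X" and Y: "random_variable borel Y"
    and joint: "distr M borel X \<Otimes>\<^sub>M distr M borel Y = distr M (borel \<Otimes>\<^sub>M borel) (\<lambda>\<omega>. (X \<omega>, Y \<omega>))"
    using indep unfolding indep_var_distribution_eq by auto
  interpret DX: prob_space "distr M borel X" by (rule prob_space_distr[OF X])
  interpret DY: prob_space "distr M borel Y" by (rule prob_space_distr[OF Y])
  interpret pair_prob_space "distr M borel X" "distr M borel Y" ..
  define D where "D = {p \<in> space (borel \<Otimes>\<^sub>M borel :: ('b \<times> 'b) measure). fst p = snd p}"
  have D: "D \<in> sets (borel \<Otimes>\<^sub>M borel)" unfolding D_def by measurable
  have point: "emeasure (distr M borel Z) {c} = emeasure M {\<omega> \<in> space M. Z \<omega> = c}"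
    if "Z \<in> measurable M borel" for Z :: "'a \<Rightarrow> 'b" and c
    using that by (subst emeasure_distr) (auto simp: vimage_def Int_def conj_commute)
  have "emeasure M {\<omega> \<in> space M. X \<omega> = Y \<omega>} = emeasure M ((\<lambda>\<omega>. (X \<omega>, Y \<omega>)) -` D \<inter> space M)"
    by (intro arg_cong2[where f=emeasure]) (auto simp: D_def space_pair_measure)
  also have "\<dots> = emeasure (distr M borel X \<Otimes>\<^sub>M distr M borel Y) D"
    unfolding joint using X Y D by (intro emeasure_distr[symmetric] measurable_Pair)
  also have "\<dots> = 0"
    using atomless
  proof
    assume "\<forall>c. emeasure M {\<omega> \<in> space M. X \<omega> = c} = 0"
    then have "emeasure (distr M borel X) ((\<lambda>x. (x, y)) -` D) = 0" for y
      using point[OF X, of y] by (simp add: D_def space_pair_measure vimage_def)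
    then show ?thesis using D by (simp add: emeasure_pair_measure_alt2)
  next
    assume "\<forall>c. emeasure M {\<omega> \<in> space M. Y \<omega> = c} = 0"
    then have "emeasure (distr M borel Y) (Pair x -` D) = 0" for x
      using point[OF Y, of x] by (simp add: D_def space_pair_measure vimage_def)
    then show ?thesis using D by (simp add: DY.emeasure_pair_measure_alt)
  qed
  finally show ?thesis using X Y by (auto intro: measurable_equality_set)
qed

lemma emeasure_BM_endpoint_eq:
  assumes "BM_on M s 0 1 B" "s > 0" "\<forall>\<omega>\<in>space M. B \<omega> 0 = 0" "\<sigma> \<noteq> 0"
  shows "emeasure M {\<omega> \<in> space M. ereal (a + \<sigma> * B \<omega> 1) = c} = 0"
proof (cases c)
  case (real r)
  have "{\<omega> \<in> space M. ereal (a + \<sigma> * B \<omega> 1) = c} = {\<omega> \<in> space M. B \<omega> 1 - B \<omega> 0 = (r - a) / \<sigma>}"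
    using real assms(3,4) by (auto simp: field_simps)
  then show ?thesis using emeasure_BM_increment_eq[OF assms(1,2)] by simp
qed auto

definition unit_rat_sup :: "(real \<Rightarrow> real \<Rightarrow> real) \<Rightarrow> (real \<Rightarrow> real) \<Rightarrow> ereal" where
  "unit_rat_sup h x = (SUP q\<in>rat_interval 0 1. ereal (h q (x q)))"

lemma measurable_unit_rat_sup:
  assumes "\<And>q. h q \<in> borel_measurable borel"
  shows "unit_rat_sup h \<in> borel_measurable (PiM {0..1} (\<lambda>_. borel :: real measure))"
  unfolding unit_rat_sup_def
proof (rule borel_measurable_SUP[OF countable_rat_interval])
  fix q assume "q \<in> rat_interval 0 1"
  then have "(\<lambda>x. x q) \<in> borel_measurable (PiM {0..1} (\<lambda>_. borel :: real measure))"
    by (intro measurable_component_singleton) (auto simp: rat_interval_def)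
  then show "(\<lambda>x. ereal (h q (x q))) \<in> borel_measurable (PiM {0..1} (\<lambda>_. borel))"
    by (intro borel_measurable_ereal measurable_compose[OF _ assms])
qed

lemma unit_rat_sup_restrict:
  assumes "continuous_on {0..1} (\<lambda>t. h t (x t))"
  shows "unit_rat_sup h (restrict x {0..1}) = ereal (Sup ((\<lambda>t. h t (x t)) ` {0..1}))"
proof -
  have "unit_rat_sup h (restrict x {0..1}) = (SUP q\<in>rat_interval 0 1. ereal (h q (x q)))"
    unfolding unit_rat_sup_def by (intro SUP_cong refl) (auto simp: rat_interval_def)
  also have "\<dots> = ereal (Sup ((\<lambda>t. h t (x t)) ` {0..1}))"
    using assms by (intro SUP_rat_interval_eq_Sup) auto
  finally show ?thesis .
qed

lemma (in prob_space) prob_add_eq_of_dichotomy: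
  assumes events: "A \<in> events" "B \<in> events" "T \<in> events" and N: "N \<in> null_sets M"
    and dichotomy: "\<And>x. x \<in> space M \<Longrightarrow> x \<notin> N \<Longrightarrow> (x \<in> A \<or> x \<in> B) \<and> (x \<in> A \<and> x \<in> B \<longleftrightarrow> x \<in> T)"
  shows "prob A + prob B = 1 + prob T"
proof -
  have ae: "AE x in M. (x \<in> A \<or> x \<in> B) \<and> (x \<in> A \<and> x \<in> B \<longleftrightarrow> x \<in> T)"
    using AE_not_in[OF N] AE_space by eventually_elim (use dichotomy in blast)
  have "prob (A \<union> B) = prob (space M)"
    using ae events by (intro measure_eq_AE) (auto elim: AE_mp intro!: AE_I2)
  moreover have "prob (A \<inter> B) = prob T"
    using ae events by (intro measure_eq_AE) (auto elim: AE_mp intro!: AE_I2)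
  moreover have "prob (A \<union> B) = prob A + prob B - prob (A \<inter> B)"
    using events by (intro measure_Un3) (simp_all add: fmeasurable_eq_sets)
  ultimately show ?thesis by (simp add: prob_space)
qed

locale two_sided_barrier = two_sided_BM +
  fixes f :: "real \<Rightarrow> real"
  assumes cont_f: "continuous_on {-1..1} f" and f_0: "f 0 = 0"
begin

lemma barrier_path_two_sided: "\<omega> \<in> space M \<Longrightarrow> barrier_path f (V \<omega>)"
  using cont_f f_0 continuous_two_sided by unfold_locales

lemma gap_two_sided_left: "\<omega> \<in> space M \<Longrightarrow> u \<le> 0 \<Longrightarrow> barrier_gap f (V \<omega>) u = B1 \<omega> (- u) + f u"
  using start_0 by (simp add: barrier_gap_def two_sided_def)

lemma gap_two_sided_right: "\<omega> \<in> space M \<Longrightarrow> 0 \<le> u \<Longrightarrow> barrier_gap f (V \<omega>) u = f u - B2 \<omega> u"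
  using start_0 f_0 by (cases "u = 0") (auto simp: barrier_gap_def two_sided_def)

lemma left_max_two_sided:
  assumes "\<omega> \<in> space M"
  shows "Sup (barrier_gap f (V \<omega>) ` {-1..0}) = Sup ((\<lambda>t. B1 \<omega> t + f (- t)) ` {0..1})"
proof -
  have "{-1..0::real} = uminus ` {0..1}" by (simp add: image_uminus_atLeastAtMost)
  then have "barrier_gap f (V \<omega>) ` {-1..0} = (\<lambda>t. barrier_gap f (V \<omega>) (- t)) ` {0..1}"
    by (simp only: image_image)
  also have "\<dots> = (\<lambda>t. B1 \<omega> t + f (- t)) ` {0..1}"
    using assms by (intro image_cong refl) (simp add: gap_two_sided_left)
  finally show ?thesis by simp
qed

lemma right_max_two_sided:
  "\<omega> \<in> space M \<Longrightarrow> Sup (barrier_gap f (V \<omega>) ` {0..1}) = Sup ((\<lambda>t. f t - B2 \<omega> t) ` {0..1})"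
  by (intro arg_cong[where f=Sup] image_cong refl) (simp add: gap_two_sided_right)

lemma Zval_two_sided:
  assumes "\<omega> \<in> space M"
  shows "Zval f (B1 \<omega>) (B2 \<omega>) = Sup (barrier_gap f (V \<omega>) ` {-1..0}) - Sup (barrier_gap f (V \<omega>) ` {0..1})"
proof -
  have "Inf ((\<lambda>t. B2 \<omega> t - f t) ` {0..1}) = - Sup ((\<lambda>t. f t - B2 \<omega> t) ` {0..1})"
    unfolding Inf_real_def image_image by (simp add: image_image)
  then show ?thesis
    unfolding Zval_def left_max_two_sided[OF assms] right_max_two_sided[OF assms] by simp
qed


lemma events_rat_increments_two_sided:
  "G \<in> sets rat_paths \<Longrightarrow> {\<omega> \<in> space M. rat_increments (V \<omega>) \<in> G} \<in> events"
  using measurable_sets[OF measurable_rat_increments[OF gaussian_increments_two_sided]]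
  by (simp add: vimage_def Int_def conj_commute)

lemma rat_increments_two_sided_in_far_end_event_iff:
  assumes "\<omega> \<in> space M"
  shows "rat_increments (V \<omega>) \<in> far_end_event f \<longleftrightarrow>
    Sup ((\<lambda>t. B1 \<omega> t + f (- t)) ` {0..1}) = f 1 - B2 \<omega> 1 \<or>
    Sup ((\<lambda>t. f t - B2 \<omega> t) ` {0..1}) = B1 \<omega> 1 + f (-1)"
proof -
  have "barrier_gap f (V \<omega>) 1 = f 1 - B2 \<omega> 1" "barrier_gap f (V \<omega>) (-1) = B1 \<omega> 1 + f (-1)"
    using assms by (simp_all add: gap_two_sided_left gap_two_sided_right)
  then show ?thesis
    using barrier_path.rat_increments_in_far_end_event_iff[OF barrier_path_two_sided[OF assms]]
    unfolding left_max_two_sided[OF assms] right_max_two_sided[OF assms] by simp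
qed

lemma far_end_event_null: "{\<omega> \<in> space M. rat_increments (V \<omega>) \<in> far_end_event f} \<in> null_sets M"
proof -
  let ?P = "PiM {0..1} (\<lambda>_. borel :: real measure)"
  let ?R1 = "\<lambda>\<omega>. restrict (B1 \<omega>) {0..1}" and ?R2 = "\<lambda>\<omega>. restrict (B2 \<omega>) {0..1}"
  define sup1 where "sup1 = unit_rat_sup (\<lambda>q v. v + f (- q))"
  define sup2 where "sup2 = unit_rat_sup (\<lambda>q v. f q - v)"
  define end1 where "end1 x = ereal (f (-1) + 1 * x 1)" for x :: "real \<Rightarrow> real"
  define end2 where "end2 x = ereal (f 1 + (-1) * x 1)" for x :: "real \<Rightarrow> real"
  have meas: "sup1 \<in> borel_measurable ?P" "sup2 \<in> borel_measurable ?P"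
    "end1 \<in> borel_measurable ?P" "end2 \<in> borel_measurable ?P"
    unfolding sup1_def sup2_def end1_def end2_def
    by (intro measurable_unit_rat_sup borel_measurable_ereal borel_measurable_add borel_measurable_const
        borel_measurable_times borel_measurable_diff measurable_component_singleton measurable_ident; simp)+
  have atoms1: "emeasure M {\<omega> \<in> space M. (end1 \<circ> ?R1) \<omega> = c} = 0" for c
    using emeasure_BM_endpoint_eq[OF BM1 s_pos, of 1 "f (-1)" c] start_0 by (simp add: end1_def)
  have atoms2: "emeasure M {\<omega> \<in> space M. (end2 \<circ> ?R2) \<omega> = c} = 0" for c
    using emeasure_BM_endpoint_eq[OF BM2 s_pos, of "-1" "f 1" c] start_0 by (simp add: end2_def)
  have null1: "{\<omega> \<in> space M. (sup1 \<circ> ?R1) \<omega> = (end2 \<circ> ?R2) \<omega>} \<in> null_sets M"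
    using atoms2 by (intro indep_var_eq_null indep_var_compose[OF indep meas(1) meas(4)]) simp
  have null2: "{\<omega> \<in> space M. (end1 \<circ> ?R1) \<omega> = (sup2 \<circ> ?R2) \<omega>} \<in> null_sets M"
    using atoms1 by (intro indep_var_eq_null indep_var_compose[OF indep meas(3) meas(2)]) simp
  have "{\<omega> \<in> space M. rat_increments (V \<omega>) \<in> far_end_event f} \<subseteq>
      {\<omega> \<in> space M. (sup1 \<circ> ?R1) \<omega> = (end2 \<circ> ?R2) \<omega>} \<union> {\<omega> \<in> space M. (end1 \<circ> ?R1) \<omega> = (sup2 \<circ> ?R2) \<omega>}"
  proof safe
    fix \<omega> assume \<omega>: "\<omega> \<in> space M" and "rat_increments (V \<omega>) \<in> far_end_event f"
      and "(end1 \<circ> ?R1) \<omega> \<noteq> (sup2 \<circ> ?R2) \<omega>"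
    moreover have "continuous_on {0..1} (B1 \<omega>)" "continuous_on {0..1} (B2 \<omega>)"
      using BM1 BM2 \<omega> by (auto simp: BM_on_def)
    then have "sup1 (?R1 \<omega>) = ereal (Sup ((\<lambda>t. B1 \<omega> t + f (- t)) ` {0..1}))"
      "sup2 (?R2 \<omega>) = ereal (Sup ((\<lambda>t. f t - B2 \<omega> t) ` {0..1}))"
      unfolding sup1_def sup2_def
      by (intro unit_rat_sup_restrict continuous_intros continuous_on_compose2[OF cont_f]
          continuous_on_subset[OF cont_f]; force)+
    ultimately show "(sup1 \<circ> ?R1) \<omega> = (end2 \<circ> ?R2) \<omega>"
      using rat_increments_two_sided_in_far_end_event_iff[OF \<omega>] by (auto simp: end1_def end2_def)
  qed
  moreover have "{\<omega> \<in> space M. rat_increments (V \<omega>) \<in> far_end_event f} \<in> events"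
    by (rule events_rat_increments_two_sided[OF sets_far_end_event])
  moreover have "emeasure M ({\<omega> \<in> space M. (sup1 \<circ> ?R1) \<omega> = (end2 \<circ> ?R2) \<omega>} \<union>
      {\<omega> \<in> space M. (end1 \<circ> ?R1) \<omega> = (sup2 \<circ> ?R2) \<omega>}) = 0"
    using null1 null2 by (intro null_setsD1 null_sets.Un)
  ultimately show ?thesis
    using null1 null2 by (metis (no_types, lifting) emeasure_mono le_zero_eq null_setsD2 null_setsI sets.Un)
qed


lemma prob_hit_minus_add_hit_plus:
  "prob {\<omega> \<in> space M. rat_increments (V \<omega>) \<in> hit_minus_event f} +
   prob {\<omega> \<in> space M. rat_increments (V \<omega>) \<in> hit_plus_event f} =
   1 + prob {\<omega> \<in> space M. Zval f (B1 \<omega>) (B2 \<omega>) = 0}"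
proof -
  have "{\<omega> \<in> space M. Zval f (B1 \<omega>) (B2 \<omega>) = 0} = {\<omega> \<in> space M. rat_increments (V \<omega>) \<in> tie_event f}"
    using barrier_path.rat_increments_in_tie_event_iff[OF barrier_path_two_sided]
    by (auto simp: Zval_two_sided)
  moreover have "prob {\<omega> \<in> space M. rat_increments (V \<omega>) \<in> hit_minus_event f} +
      prob {\<omega> \<in> space M. rat_increments (V \<omega>) \<in> hit_plus_event f} =
      1 + prob {\<omega> \<in> space M. rat_increments (V \<omega>) \<in> tie_event f}"
    using barrier_path.rat_increments_dichotomy[OF barrier_path_two_sided]
    by (intro prob_add_eq_of_dichotomy[OF _ _ _ far_end_event_null] events_rat_increments_two_sided
        sets_hit_minus_event sets_hit_plus_event sets_tie_event) auto
  ultimately show ?thesis by simp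
qed

end

section \<open>Transfer to the reflected processes\<close>

lemma measure_rat_increments_eq:
  assumes "gaussian_increments M s W" "gaussian_increments N s V" "G \<in> sets rat_paths"
  shows "measure M {\<omega> \<in> space M. rat_increments (W \<omega>) \<in> G} = measure N {\<omega> \<in> space N. rat_increments (V \<omega>) \<in> G}"
  using measure_distr[OF measurable_rat_increments[OF assms(1)] assms(3)]
    measure_distr[OF measurable_rat_increments[OF assms(2)] assms(3)] distr_rat_increments_eq[OF assms(1,2)]
  by (simp add: vimage_def Int_def conj_commute)

lemma barrier_path_BM:
  "BM_on M s (-1) 1 W \<Longrightarrow> continuous_on {-1..1} f \<Longrightarrow> f 0 = 0 \<Longrightarrow> \<omega> \<in> space M \<Longrightarrow> barrier_path f (W \<omega>)"
  by unfold_locales (auto simp: BM_on_def)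

lemma p_minus_eq_rat_increments:
  assumes "BM_on M s (-1) 1 W" "continuous_on {-1..1} f" "f 0 = 0"
  shows "p_minus M f W = measure M {\<omega> \<in> space M. rat_increments (W \<omega>) \<in> hit_minus_event f}"
  unfolding p_minus_def using barrier_path.rat_increments_in_hit_minus_event_iff[OF barrier_path_BM[OF assms]]
  by (metis (no_types, lifting))

lemma p_plus_eq_rat_increments:
  assumes "BM_on M s (-1) 1 W" "continuous_on {-1..1} f" "f 0 = 0"
  shows "p_plus M f W = measure M {\<omega> \<in> space M. rat_increments (W \<omega>) \<in> hit_plus_event f}"
  unfolding p_plus_def using barrier_path.rat_increments_in_hit_plus_event_iff[OF barrier_path_BM[OF assms]]
  by (metis (no_types, lifting))

theorem mainTheorem13:
  fixes f :: "real \<Rightarrow> real" and s :: real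
    and M1 :: "'a measure" and Wm :: "'a \<Rightarrow> real \<Rightarrow> real"
    and M2 :: "'b measure" and Wp :: "'b \<Rightarrow> real \<Rightarrow> real"
    and M3 :: "'c measure" and B1 B2 :: "'c \<Rightarrow> real \<Rightarrow> real"
  assumes "continuous_on {-1..1} f" and "f 0 = 0" and "s > 0"
    and "BM_on M1 s (-1) 1 Wm"
    and "BM_on M2 s (-1) 1 Wp"
    and "BM_on M3 s 0 1 B1" and "BM_on M3 s 0 1 B2"
    and "\<forall>\<omega>\<in>space M3. B1 \<omega> 0 = 0 \<and> B2 \<omega> 0 = 0"
    and "prob_space.indep_var M3
           (PiM {0..1} (\<lambda>_. borel)) (\<lambda>\<omega>. restrict (B1 \<omega>) {0..1})
           (PiM {0..1} (\<lambda>_. borel)) (\<lambda>\<omega>. restrict (B2 \<omega>) {0..1})"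
  shows "p_minus M1 f Wm + p_plus M2 f Wp \<ge> 1 \<and>
         (p_minus M1 f Wm + p_plus M2 f Wp = 1 \<longleftrightarrow>
            measure M3 {\<omega> \<in> space M3. Zval f (B1 \<omega>) (B2 \<omega>) = 0} = 0)"
proof -
  interpret two_sided_barrier M3 s B1 B2 f
    using assms by unfold_locales auto
  have "p_minus M1 f Wm = prob {\<omega> \<in> space M3. rat_increments (V \<omega>) \<in> hit_minus_event f}"
    using p_minus_eq_rat_increments[OF assms(4,1,2)] measure_rat_increments_eq[OF
        gaussian_increments_BM[OF assms(4)] gaussian_increments_two_sided sets_hit_minus_event] by simp
  moreover have "p_plus M2 f Wp = prob {\<omega> \<in> space M3. rat_increments (V \<omega>) \<in> hit_plus_event f}"
    using p_plus_eq_rat_increments[OF assms(5,1,2)] measure_rat_increments_eq[OF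
        gaussian_increments_BM[OF assms(5)] gaussian_increments_two_sided sets_hit_plus_event] by simp
  ultimately have "p_minus M1 f Wm + p_plus M2 f Wp = 1 + prob {\<omega> \<in> space M3. Zval f (B1 \<omega>) (B2 \<omega>) = 0}"
    using prob_hit_minus_add_hit_plus by simp
  then show ?thesis by simp
qed

end
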